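(* Let $m\ge3$ be odd, $n\ge 0$ an integer, $h=8(m-2)n+3(m-4)^2$, and $\bm d=(d_1,d_2,d_3)\in\mathbb{N}^3$. Let $p$ be an odd prime with $p\mid(m-2)$. Then \[ b_p(h,\lambda_{\bm d},0)=\begin{cases} p^{\mathrm{ord}_p(m-2)+\min_j\{\mathrm{ord}_p(d_j)\}} & \text{if } n\in\gcd(d_1,d_2,d_3)\mathbb{Z}_p,\\ 0&\text{otherwise.}\end{cases} \]
   Context: $V$ is the ternary quadratic space over $\mathbb{Q}$ with basis $e_1,e_2,e_3$, $B(e_i,e_j)=4(m-2)^2\delta_{ij}$, $Q(x)=B(x,x)$; $L^{\bm d}=\mathbb{Z}d_1e_1+\mathbb{Z}d_2e_2+\mathbb{Z}d_3e_3$, $\nu=\frac{4-m}{2(m-2)}(e_1+e_2+e_3)$, $X^{\bm d}=L^{\bm d}+\nu$, and $\lambda_{\bm d}$ is the characteristic function of $X^{\bm d}$. For $z\in\mathbb{Q}_p$, $\bm e_p(z)=e^{-2\pi i y}$ where $y\in\bigcup_{t\ge1}p^{-t}\mathbb{Z}$ satisfies $z-y\in\mathbb{Z}_p$. With Haar measures $dv$ on $L^{\bm d}_p=L^{\bm d}\otimes\mathbb{Z}_p$ and $d\sigma$ on $\mathbb{Q}_p$ normalized so that $L^{\bm d}_p$ and $\mathbb{Z}_p$ have volume $1$, the local density is \[ b_p(h,\lambda_{\bm d},0)=\int_{\mathbb{Q}_p}\int_{L^{\bm d}_p}\bm e_p\big(\sigma(Q(v+\nu)-h)\big)\,dv\,d\sigma.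 \] *)

theory Defs
  imports Complex_Main "HOL-Computational_Algebra.Primes"
begin

text \<open>p-adic notions restricted to the rationals (the integrand only ever
  takes rational values at the coset representatives used below).\<close>

definition in_Zp :: "nat \<Rightarrow> rat \<Rightarrow> bool" where
  "in_Zp p q \<longleftrightarrow> coprime (snd (quotient_of q)) (int p)"

definition in_Z_inv_p :: "nat \<Rightarrow> rat \<Rightarrow> bool" where
  "in_Z_inv_p p q \<longleftrightarrow> (\<exists>(a::int) (t::nat). q = of_int a / of_nat p ^ t)"

definition e_p :: "nat \<Rightarrow> rat \<Rightarrow> complex" where
  "e_p p z = cis (- 2 * pi * real_of_rat (SOME y. in_Z_inv_p p y \<and> in_Zp p (z - y)))"

definition Qform :: "int \<Rightarrow> rat \<times> rat \<times> rat \<Rightarrow> rat" where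
  "Qform m x = (case x of (x1, x2, x3) \<Rightarrow>
      4 * (of_int m - 2)^2 * (x1^2 + x2^2 + x3^2))"

text \<open>The common coordinate of nu = (4-m)/(2(m-2)) (e_1+e_2+e_3).\<close>
definition nu_coord :: "int \<Rightarrow> rat" where
  "nu_coord m = (4 - of_int m) / (2 * (of_int m - 2))"

text \<open>The local density integral truncated to sigma in p^(-t) Z_p, computed
  exactly: for sigma in p^(-t) Z_p the integrand
  e_p(sigma (Q(v+nu) - h)) is constant on the cosets (a/p^t + Z_p) x (w + p^t L_p),
  because Q(v+nu) = sum_j (2(m-2) d_j x_j + 4 - m)^2 is integral in the coordinates x_j
  of v = sum_j d_j x_j e_j.  Each sigma-coset has measure 1, each v-coset p^(-3t).\<close>
definition local_density_trunc ::
  "nat \<Rightarrow> int \<Rightarrow> int \<Rightarrow> int \<Rightarrow> int \<Rightarrow> int \<Rightarrow> nat \<Rightarrow> complex" where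
  "local_density_trunc p m d1 d2 d3 h t =
     (\<Sum>a\<in>{0..<p^t}. \<Sum>x1\<in>{0..<p^t}. \<Sum>x2\<in>{0..<p^t}. \<Sum>x3\<in>{0..<p^t}.
        e_p p ((of_nat a / of_nat p ^ t) *
          (Qform m (of_int d1 * of_nat x1 + nu_coord m,
                    of_int d2 * of_nat x2 + nu_coord m,
                    of_int d3 * of_nat x3 + nu_coord m) - of_int h)))
     / of_nat p ^ (3 * t)"

text \<open>b_p(h, lambda_d, 0) = c means the (improper) integral over Q_p, i.e. the limit
  of the truncations over p^(-t) Z_p, exists and equals c.\<close>
definition has_local_density ::
  "nat \<Rightarrow> int \<Rightarrow> int \<Rightarrow> int \<Rightarrow> int \<Rightarrow> int \<Rightarrow> complex \<Rightarrow> bool" where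
  "has_local_density p m d1 d2 d3 h c \<longleftrightarrow>
     (local_density_trunc p m d1 d2 d3 h \<longlonglongrightarrow> c)"

end

theory Submission
  imports Defs "HOL-Library.Real_Mod"
begin

text \<open>Write M = m - 2 and g_d(x) = x (M d x + 2 - M). On the lattice coset the form is integral,
  Q(v + nu) - h = 4M (d_1 g_d1(x_1) + d_2 g_d2(x_2) + d_3 g_d3(x_3)) - 8Mn, so the truncated density
  at level p^t is a finite exponential sum that factors into three sums over the x_j. As p divides M
  and p is odd, g_d permutes Z/p^t, so each of them is a complete character sum: p^t or 0 according
  as p^t divides 4aMd_j or not. With mu = ord_p M and k = min_j ord_p d_j, what is left is a
  character sum over the multiples of p^(t-mu-k); for t \<ge> mu + k it equals p^(mu+k) if p^(mu+k)
  divides 8Mn, i.e. if p^k divides n, and 0 otherwise. So the truncations are eventually constant.\<close>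

definition unity_root :: "nat \<Rightarrow> int \<Rightarrow> complex" where
  "unity_root q X = cis (2 * pi * of_int X / of_nat q)"

lemma unity_root_add: "unity_root q (X + Y) = unity_root q X * unity_root q Y"
  unfolding unity_root_def cis_mult by (simp add: add_divide_distrib distrib_left)

lemma unity_root_eq_1_iff:
  assumes "q > 0"
  shows "unity_root q X = 1 \<longleftrightarrow> int q dvd X"
proof
  assume "unity_root q X = 1"
  then obtain n where "2 * pi * of_int X / of_nat q = of_int n * (2 * pi)"
    unfolding unity_root_def cis_eq_1_iff by auto
  then have "real_of_int X = of_int (n * int q)"
    using assms by (simp add: field_simps)
  then show "int q dvd X"
    by (metis dvd_triv_right of_int_eq_iff)
next
  assume "int q dvd X"
  then obtain k where "X = int q * k" by (elim dvdE)
  then have "2 * pi * of_int X / of_nat q = 2 * pi * of_int k"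
    using assms by simp
  then show "unity_root q X = 1"
    by (simp add: unity_root_def)
qed

lemma unity_root_mod:
  assumes "q > 0"
  shows "unity_root q (X mod int q) = unity_root q X"
  using unity_root_add[of q "X mod int q" "int q * (X div int q)"] unity_root_eq_1_iff[OF assms]
  by simp

lemma unity_root_of_nat_mult: "unity_root q (int a * X) = unity_root q X ^ a"
  unfolding unity_root_def DeMoivre by (simp add: mult_ac)

lemma unity_root_scale:
  assumes "r > 0"
  shows "unity_root (r * q) (int r * X) = unity_root q X"
  using assms by (simp add: unity_root_def mult.assoc)

lemma sum_unity_root:
  assumes "q > 0"
  shows "(\<Sum>a\<in>{0..<q}. unity_root q (int a * X)) = (if int q dvd X then of_nat q else 0)"
proof (cases "int q dvd X")
  case True
  then have "unity_root q (int a * X) = 1" for a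
    using unity_root_eq_1_iff[OF assms] by simp
  then show ?thesis
    using True by simp
next
  case False
  then have "unity_root q X \<noteq> 1"
    using unity_root_eq_1_iff[OF assms] by simp
  moreover have "unity_root q X ^ q = 1"
    by (metis dvd_triv_left unity_root_eq_1_iff[OF assms] unity_root_of_nat_mult)
  ultimately have "(\<Sum>a<q. unity_root q X ^ a) = 0"
    by (simp add: geometric_sum)
  then show ?thesis
    using False by (simp add: unity_root_of_nat_mult atLeast0LessThan)
qed

lemma sum_over_multiples:
  fixes f :: "nat \<Rightarrow> 'a::comm_monoid_add"
  assumes "r > 0"
  shows "(\<Sum>a\<in>{0..<r * s}. if r dvd a then f a else 0) = (\<Sum>b\<in>{0..<s}. f (b * r))"
proof -
  have "{a \<in> {0..<r * s}. r dvd a} = (\<lambda>b. b * r) ` {0..<s}"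
    using assms by (auto elim!: dvdE simp: mult.commute)
  moreover have "inj_on (\<lambda>b. b * r) {0..<s}"
    using assms by (simp add: inj_on_def)
  ultimately show ?thesis
    by (simp add: sum.inter_filter[symmetric] sum.reindex)
qed

lemma sum_unity_root_multiples:
  assumes "r > 0" "s > 0"
  shows "(\<Sum>a\<in>{0..<r * s}. if r dvd a then unity_root (r * s) (int a * X) else 0)
       = (if int s dvd X then of_nat s else 0)"
proof -
  have "(\<Sum>a\<in>{0..<r * s}. if r dvd a then unity_root (r * s) (int a * X) else 0)
      = (\<Sum>b\<in>{0..<s}. unity_root (r * s) (int r * (int b * X)))"
    unfolding sum_over_multiples[OF assms(1)] by (simp add: mult_ac)
  also have "\<dots> = (\<Sum>b\<in>{0..<s}. unity_root s (int b * X))"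
    using unity_root_scale[OF assms(1)] by simp
  finally show ?thesis
    using sum_unity_root[OF assms(2)] by simp
qed

lemma sum_reindex_residues:
  fixes g :: "nat \<Rightarrow> int" and F :: "int \<Rightarrow> 'a::comm_monoid_add"
  assumes q: "q > 0"
    and inj: "\<And>x y. x < q \<Longrightarrow> y < q \<Longrightarrow> g x mod int q = g y mod int q \<Longrightarrow> x = y"
  shows "(\<Sum>x\<in>{0..<q}. F (g x mod int q)) = (\<Sum>y\<in>{0..<q}. F (int y))"
proof -
  define \<phi> where "\<phi> x = nat (g x mod int q)" for x
  have \<phi>: "int (\<phi> x) = g x mod int q" for x
    using q by (simp add: \<phi>_def)
  have "inj_on \<phi> {0..<q}"
    by (intro inj_onI) (metis \<phi> atLeastLessThan_iff inj)
  moreover have "\<phi> ` {0..<q} \<subseteq> {0..<q}"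
    using q by (auto simp: \<phi>_def nat_less_iff)
  ultimately have "bij_betw \<phi> {0..<q} {0..<q}"
    by (simp add: bij_betw_def endo_inj_surj)
  then show ?thesis
    using sum.reindex_bij_betw[of \<phi> "{0..<q}" "{0..<q}" "\<lambda>y. F (int y)"] by (simp add: \<phi>)
qed

lemma quadratic_mod_prime_power_inj:
  fixes P A B x y :: int
  assumes "prime P" "P dvd A" "\<not> P dvd B"
    and "(x * (A * x + B)) mod P ^ t = (y * (A * y + B)) mod P ^ t"
  shows "x mod P ^ t = y mod P ^ t"
proof -
  have "\<not> P dvd A * (x + y) + B"
    using assms(2,3) by (metis dvd_add_right_iff dvd_mult2)
  then have "coprime (P ^ t) (A * (x + y) + B)"
    using assms(1) by (simp add: prime_imp_coprime)
  moreover have "P ^ t dvd (x - y) * (A * (x + y) + B)"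
    using assms(4) unfolding mod_eq_dvd_iff by (simp add: algebra_simps)
  ultimately show ?thesis
    unfolding mod_eq_dvd_iff by (simp add: coprime_dvd_mult_left_iff)
qed

lemma sum_unity_root_quadratic:
  fixes A B c :: int
  assumes p: "prime p" and "int p dvd A" "\<not> int p dvd B"
  shows "(\<Sum>x\<in>{0..<p ^ t}. unity_root (p ^ t) (c * (int x * (A * int x + B))))
       = (if int p ^ t dvd c then of_nat (p ^ t) else 0)"
proof -
  let ?q = "p ^ t"
  have q: "?q > 0"
    using p by (simp add: prime_gt_0_nat)
  have inj: "x = y" if "x < ?q" "y < ?q"
    and "(int x * (A * int x + B)) mod int ?q = (int y * (A * int y + B)) mod int ?q" for x y
  proof -
    have "prime (int p)"
      using p by simp
    then have "int x mod int ?q = int y mod int ?q"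
      using quadratic_mod_prime_power_inj assms(2,3) that(3) unfolding of_nat_power by blast
    then show "x = y"
      using that(1,2) by simp
  qed
  have "(\<Sum>x\<in>{0..<?q}. unity_root ?q (c * (int x * (A * int x + B))))
      = (\<Sum>x\<in>{0..<?q}. unity_root ?q (c * ((int x * (A * int x + B)) mod int ?q)))"
    by (intro sum.cong refl) (metis unity_root_mod[OF q] mod_mult_right_eq)
  also have "\<dots> = (\<Sum>y\<in>{0..<?q}. unity_root ?q (c * int y))"
    by (rule sum_reindex_residues[OF q inj])
  also have "\<dots> = (if int p ^ t dvd c then of_nat ?q else 0)"
    using sum_unity_root[OF q, of c] by (simp add: mult.commute)
  finally show ?thesis .
qed

lemma prime_power_dvd_mult_iff:
  fixes P a D :: int
  assumes "prime P" "D \<noteq> 0"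
  shows "P ^ t dvd a * D \<longleftrightarrow> P ^ (t - multiplicity P D) dvd a"
proof (cases "a = 0")
  case False
  have P: "\<not> is_unit P"
    using assms(1) not_prime_unit by blast
  have "P ^ t dvd a * D \<longleftrightarrow> t \<le> multiplicity P a + multiplicity P D"
    using assms False P prime_elem_multiplicity_mult_distrib[OF prime_imp_prime_elem[OF assms(1)] False]
    by (simp add: power_dvd_iff_le_multiplicity)
  also have "\<dots> \<longleftrightarrow> P ^ (t - multiplicity P D) dvd a"
    using False P by (simp add: power_dvd_iff_le_multiplicity le_diff_conv)
  finally show ?thesis .
qed simp

lemma odd_prime_not_dvd_power_two:
  assumes "prime p" "odd p"
  shows "\<not> int p dvd 2 ^ j"
proof
  assume "int p dvd 2 ^ j"
  then have "int p dvd 2"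
    using assms(1) prime_dvd_power[of "int p"] by simp
  then have "p dvd 2"
    by (metis int_dvd_int_iff of_nat_numeral)
  then have "p = 2"
    using assms(1) dvd_imp_le[of p 2] prime_ge_2_nat[of p] by simp
  then show False
    using assms(2) by simp
qed

lemma multiplicity_power_two_mult:
  assumes "prime p" "odd p" "x \<noteq> 0"
  shows "multiplicity (int p) (2 ^ j * x) = multiplicity (int p) x"
proof -
  have "multiplicity (int p) (2 ^ j) = 0"
    using odd_prime_not_dvd_power_two[OF assms(1,2)] by (rule not_dvd_imp_multiplicity_0)
  then show ?thesis
    using assms(1,3) by (simp add: prime_elem_multiplicity_mult_distrib)
qed

lemma in_Z_inv_p_diff:
  assumes "p > 0" "in_Z_inv_p p z" "in_Z_inv_p p y"
  shows "in_Z_inv_p p (z - y)"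
proof -
  obtain a s b u where z: "z = of_int a / of_nat p ^ s" and y: "y = of_int b / of_nat p ^ u"
    using assms(2,3) unfolding in_Z_inv_p_def by blast
  have "z - y = of_int (a * int p ^ u - b * int p ^ s) / of_nat p ^ (s + u)"
    unfolding z y using assms(1) by (simp add: field_simps power_add)
  then show ?thesis
    unfolding in_Z_inv_p_def by blast
qed

lemma in_Zp_in_Z_inv_p_imp_Ints:
  assumes "prime p" "in_Zp p r" "in_Z_inv_p p r"
  shows "r \<in> \<int>"
proof -
  obtain a u where r: "r = of_int a / of_nat p ^ u"
    using assms(3) unfolding in_Z_inv_p_def by blast
  obtain num den where q: "quotient_of r = (num, den)"
    by (cases "quotient_of r")
  have den: "den > 0" "coprime num den" "r = of_int num / of_int den"
    using quotient_of_denom_pos[OF q] quotient_of_coprime[OF q] quotient_of_div[OF q] by auto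
  have "coprime den (int p ^ u)"
    using assms(2) q unfolding in_Zp_def by simp
  have "of_int num * of_nat p ^ u = (of_int a * of_int den :: rat)"
    using r den(1,3) assms(1) by (simp add: field_simps prime_gt_0_nat)
  then have "num * int p ^ u = a * den"
    by (metis of_int_eq_iff of_int_mult of_int_of_nat_eq of_int_power)
  then have "den dvd num * int p ^ u"
    by simp
  then have "den dvd int p ^ u"
    using den(2) by (simp add: coprime_commute coprime_dvd_mult_right_iff)
  with \<open>coprime den (int p ^ u)\<close> have "is_unit den"
    by (metis coprime_common_divisor dvd_refl)
  then have "den = 1"
    using den(1) by simp
  then show ?thesis
    using den(3) by simp
qed

text \<open>The choice in e_p only matters up to an integer, as \<open>\<int>[1/p] \<inter> \<int>\<^sub>p = \<int>\<close>.\<close>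

lemma e_p_eq_cis:
  assumes "prime p" "in_Z_inv_p p z"
  shows "e_p p z = cis (- 2 * pi * real_of_rat z)"
proof -
  define y where "y = (SOME y. in_Z_inv_p p y \<and> in_Zp p (z - y))"
  have "in_Z_inv_p p z \<and> in_Zp p (z - z)"
    using assms(2) unfolding in_Zp_def by simp
  then have "in_Z_inv_p p y \<and> in_Zp p (z - y)"
    unfolding y_def by (rule someI)
  then have "z - y \<in> \<int>"
    using assms in_Z_inv_p_diff in_Zp_in_Z_inv_p_imp_Ints prime_gt_0_nat by blast
  then obtain k where "z - y = of_int k"
    by (elim Ints_cases)
  then have "y = z - of_int k"
    by simp
  then have y: "real_of_rat y = real_of_rat z - of_int k"
    by (simp add: of_rat_diff)
  have "cis (- 2 * pi * real_of_rat y) = cis (- 2 * pi * real_of_rat z) * cis (2 * pi * of_int k)"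
    unfolding y cis_mult by (simp add: algebra_simps)
  then show ?thesis
    unfolding e_p_def y_def[symmetric] by simp
qed

lemma e_p_of_int_div_prime_power:
  assumes "prime p"
  shows "e_p p (of_int X / of_nat p ^ t) = unity_root (p ^ t) (- X)"
proof -
  have "in_Z_inv_p p (of_int X / of_nat p ^ t)"
    unfolding in_Z_inv_p_def by blast
  then show ?thesis
    using assms by (simp add: e_p_eq_cis unity_root_def of_rat_divide of_rat_power)
qed

lemma Qform_add_nu:
  fixes m :: int and y1 y2 y3 :: rat
  assumes "m \<noteq> 2"
  shows "Qform m (y1 + nu_coord m, y2 + nu_coord m, y3 + nu_coord m)
       = (2 * (of_int m - 2) * y1 + 4 - of_int m)^2 + (2 * (of_int m - 2) * y2 + 4 - of_int m)^2
         + (2 * (of_int m - 2) * y3 + 4 - of_int m)^2"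
proof -
  have coord: "4 * (of_int m - 2)^2 * (y + nu_coord m)^2 = (2 * (of_int m - 2) * y + 4 - of_int m)^2"
    for y :: rat
  proof -
    have "(of_int m - 2 :: rat) \<noteq> 0"
      using assms by simp
    then have "2 * (of_int m - 2) * (y + nu_coord m) = 2 * (of_int m - 2) * y + 4 - of_int m"
      unfolding nu_coord_def by (simp add: field_simps)
    moreover have "4 * (of_int m - 2)^2 * (y + nu_coord m)^2 = (2 * (of_int m - 2) * (y + nu_coord m))^2"
      by algebra
    ultimately show ?thesis
      by simp
  qed
  show ?thesis
    unfolding Qform_def by (simp add: distrib_left coord)
qed

lemma Qform_lattice_coset_minus_h:
  fixes m n d1 d2 d3 :: int and x1 x2 x3 :: nat
  assumes "m \<noteq> 2"
  defines "g d x \<equiv> int x * ((m - 2) * d * int x + (4 - m))"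
  shows "Qform m (of_int d1 * of_nat x1 + nu_coord m, of_int d2 * of_nat x2 + nu_coord m,
                  of_int d3 * of_nat x3 + nu_coord m) - of_int (8 * (m - 2) * n + 3 * (m - 4)^2)
       = of_int (4 * (m - 2) * (d1 * g d1 x1 + d2 * g d2 x2 + d3 * g d3 x3) - 8 * (m - 2) * n)"
  unfolding Qform_add_nu[OF assms(1)] g_def by (simp add: power2_eq_square algebra_simps)

lemma sum_unity_root_lattice_coordinate:
  fixes m d :: int
  assumes p: "prime p" "odd p" and "int p dvd m - 2"
  shows "(\<Sum>x\<in>{0..<p ^ t}. unity_root (p ^ t)
            (- (int a * (4 * (m - 2) * d)) * (int x * ((m - 2) * d * int x + (4 - m)))))
       = (if int p ^ t dvd int a * (4 * (m - 2) * d) then of_nat (p ^ t) else 0)"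
proof -
  have "\<not> int p dvd 4 - m"
  proof
    assume "int p dvd 4 - m"
    then have "int p dvd (4 - m) + (m - 2)"
      using assms(3) by (rule dvd_add)
    then show False
      using odd_prime_not_dvd_power_two[OF p, of 1] by simp
  qed
  moreover have "int p dvd (m - 2) * d"
    using assms(3) by simp
  ultimately show ?thesis
    using sum_unity_root_quadratic[OF p(1), where B = "4 - m" and c = "- (int a * (4 * (m - 2) * d))"]
    by simp
qed

lemma local_density_trunc_eq:
  fixes m n d1 d2 d3 :: int
  assumes p: "prime p" "odd p" and "int p dvd m - 2" and "m \<noteq> 2"
  shows "local_density_trunc p m d1 d2 d3 (8 * (m - 2) * n + 3 * (m - 4)^2) t
       = (\<Sum>a\<in>{0..<p ^ t}. if \<forall>d\<in>{d1, d2, d3}. int p ^ t dvd int a * (4 * (m - 2) * d)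
                           then unity_root (p ^ t) (int a * (8 * (m - 2) * n)) else 0)"
proof -
  define q where "q = p ^ t"
  define M where "M = m - 2"
  define g where "g d x = int x * (M * d * int x + (4 - m))" for d :: int and x :: nat
  define c where "c d a = - (int a * (4 * M * d))" for d :: int and a :: nat
  define G where "G d a = (\<Sum>x\<in>{0..<q}. unity_root q (c d a * g d x))" for d a
  have G: "G d a = (if int p ^ t dvd int a * (4 * M * d) then of_nat q else 0)" for d a
    unfolding G_def g_def c_def q_def M_def by (rule sum_unity_root_lattice_coordinate[OF p assms(3)])
  have summand: "e_p p (of_nat a / of_nat p ^ t *
        (Qform m (of_int d1 * of_nat x1 + nu_coord m, of_int d2 * of_nat x2 + nu_coord m,
                  of_int d3 * of_nat x3 + nu_coord m) - of_int (8 * (m - 2) * n + 3 * (m - 4)^2)))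
      = unity_root q (int a * (8 * M * n)) * (unity_root q (c d1 a * g d1 x1)
          * (unity_root q (c d2 a * g d2 x2) * unity_root q (c d3 a * g d3 x3)))"
    for a x1 x2 x3
  proof -
    define N where "N = 4 * M * (d1 * g d1 x1 + d2 * g d2 x2 + d3 * g d3 x3) - 8 * M * n"
    have "e_p p (of_nat a / of_nat p ^ t *
        (Qform m (of_int d1 * of_nat x1 + nu_coord m, of_int d2 * of_nat x2 + nu_coord m,
                  of_int d3 * of_nat x3 + nu_coord m) - of_int (8 * (m - 2) * n + 3 * (m - 4)^2)))
      = unity_root q (- (int a * N))"
      using e_p_of_int_div_prime_power[OF p(1), of "int a * N" t]
      unfolding Qform_lattice_coset_minus_h[OF assms(4)] N_def g_def M_def q_def by simp
    also have "- (int a * N) = int a * (8 * M * n) + c d1 a * g d1 x1 + c d2 a * g d2 x2 + c d3 a * g d3 x3"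
      unfolding N_def c_def by (simp add: algebra_simps)
    finally show ?thesis
      by (simp add: unity_root_add)
  qed
  have "local_density_trunc p m d1 d2 d3 (8 * (m - 2) * n + 3 * (m - 4)^2) t
      = (\<Sum>a\<in>{0..<q}. unity_root q (int a * (8 * M * n)) * (G d1 a * (G d2 a * G d3 a)))
        / of_nat p ^ (3 * t)"
    unfolding local_density_trunc_def summand G_def q_def
    by (simp only: sum_distrib_left[symmetric] sum_distrib_right[symmetric])
  also have "\<dots> = (\<Sum>a\<in>{0..<q}. if \<forall>d\<in>{d1, d2, d3}. int p ^ t dvd int a * (4 * M * d)
                           then unity_root q (int a * (8 * M * n)) else 0)"
    using p(1) unfolding sum_divide_distrib G mult.commute[of 3] power_mult
    by (intro sum.cong) (auto simp: q_def power3_eq_cube prime_gt_0_nat)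
  finally show ?thesis
    unfolding q_def M_def .
qed

lemma prime_power_dvd_four_mult_iff:
  fixes M d :: int
  assumes p: "prime p" "odd p" and "M \<noteq> 0" "d \<noteq> 0"
  shows "int p ^ t dvd int a * (4 * M * d)
     \<longleftrightarrow> p ^ (t - (multiplicity (int p) M + multiplicity (int p) d)) dvd a"
proof -
  have P: "prime (int p)"
    using p(1) by simp
  have "M * d \<noteq> 0"
    using assms(3,4) by simp
  have "4 * M * d = 2 ^ 2 * (M * d)"
    by simp
  then have "multiplicity (int p) (4 * M * d) = multiplicity (int p) (M * d)"
    using multiplicity_power_two_mult[OF p \<open>M * d \<noteq> 0\<close>] by (simp only:)
  also have "\<dots> = multiplicity (int p) M + multiplicity (int p) d"
    using assms(3,4) by (rule prime_elem_multiplicity_mult_distrib[OF prime_imp_prime_elem[OF P]])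
  finally show ?thesis
    using prime_power_dvd_mult_iff[OF P, of "4 * M * d" t "int a"] assms(3,4)
    by (simp flip: of_nat_power)
qed

lemma prime_power_dvd_all_four_mult_iff:
  fixes M d1 d2 d3 :: int
  assumes p: "prime p" "odd p" and "M \<noteq> 0" and d: "d1 \<noteq> 0" "d2 \<noteq> 0" "d3 \<noteq> 0"
  defines "k \<equiv> min (multiplicity (int p) d1) (min (multiplicity (int p) d2) (multiplicity (int p) d3))"
  shows "(\<forall>d\<in>{d1, d2, d3}. int p ^ t dvd int a * (4 * M * d))
     \<longleftrightarrow> p ^ (t - (multiplicity (int p) M + k)) dvd a"
    (is "?all \<longleftrightarrow> p ^ ?r dvd a")
proof
  assume a: "p ^ ?r dvd a"
  show ?all
  proof
    fix d
    assume d': "d \<in> {d1, d2, d3}"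
    then have "p ^ (t - (multiplicity (int p) M + multiplicity (int p) d)) dvd p ^ ?r"
      unfolding k_def by (intro le_imp_power_dvd) auto
    moreover have "d \<noteq> 0"
      using d d' by blast
    ultimately show "int p ^ t dvd int a * (4 * M * d)"
      using a prime_power_dvd_four_mult_iff[OF p assms(3)] dvd_trans by blast
  qed
next
  assume ?all
  moreover obtain d where "d \<in> {d1, d2, d3}" "multiplicity (int p) d = k"
    unfolding k_def by (metis insertCI min_def)
  ultimately show "p ^ ?r dvd a"
    using d prime_power_dvd_four_mult_iff[OF p assms(3)] by blast
qed

lemma local_density_trunc_stable:
  fixes m n d1 d2 d3 :: int
  assumes p: "prime p" "odd p" and "int p dvd m - 2" "m \<noteq> 2"
    and d: "d1 \<noteq> 0" "d2 \<noteq> 0" "d3 \<noteq> 0"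
  defines "\<mu> \<equiv> multiplicity (int p) (m - 2)"
    and "k \<equiv> min (multiplicity (int p) d1) (min (multiplicity (int p) d2) (multiplicity (int p) d3))"
  assumes t: "t \<ge> \<mu> + k"
  shows "local_density_trunc p m d1 d2 d3 (8 * (m - 2) * n + 3 * (m - 4)^2) t
       = (if int p ^ k dvd n then of_nat p ^ (\<mu> + k) else 0)"
proof -
  define r where "r = t - (\<mu> + k)"
  have P: "prime (int p)" and p0: "p > 0" and M: "m - 2 \<noteq> 0" "2 ^ 3 * (m - 2) \<noteq> 0"
    using p(1) assms(4) by (simp_all add: prime_gt_0_nat)
  have pt: "p ^ t = p ^ r * p ^ (\<mu> + k)"
    unfolding r_def using t by (simp flip: power_add)
  have "local_density_trunc p m d1 d2 d3 (8 * (m - 2) * n + 3 * (m - 4)^2) t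
      = (\<Sum>a\<in>{0..<p ^ r * p ^ (\<mu> + k)}. if p ^ r dvd a
           then unity_root (p ^ r * p ^ (\<mu> + k)) (int a * (8 * (m - 2) * n)) else 0)"
    unfolding local_density_trunc_eq[OF p assms(3,4)] prime_power_dvd_all_four_mult_iff[OF p M(1) d]
    unfolding pt r_def \<mu>_def k_def ..
  also have "\<dots> = (if int (p ^ (\<mu> + k)) dvd n * (2 ^ 3 * (m - 2)) then of_nat (p ^ (\<mu> + k)) else 0)"
    using sum_unity_root_multiples p0 by (simp add: mult_ac)
  also have "int (p ^ (\<mu> + k)) dvd n * (2 ^ 3 * (m - 2)) \<longleftrightarrow> int p ^ k dvd n"
    using multiplicity_power_two_mult[OF p M(1), of 3]
    unfolding of_nat_power prime_power_dvd_mult_iff[OF P M(2)] \<mu>_def by simp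
  finally show ?thesis
    by simp
qed

theorem lemma3p4:
  fixes m n d1 d2 d3 :: int and p :: nat
  assumes "m \<ge> 3" and "odd m" and "n \<ge> 0"
    and "d1 > 0" and "d2 > 0" and "d3 > 0"
    and "prime p" and "odd p" and "int p dvd (m - 2)"
  shows "has_local_density p m d1 d2 d3 (8 * (m - 2) * n + 3 * (m - 4)^2)
     (if int p ^ multiplicity (int p) (gcd d1 (gcd d2 d3)) dvd n
      then of_nat p ^ (multiplicity (int p) (m - 2)
             + min (multiplicity (int p) d1) (min (multiplicity (int p) d2) (multiplicity (int p) d3)))
      else 0)"
proof -
  let ?k = "min (multiplicity (int p) d1) (min (multiplicity (int p) d2) (multiplicity (int p) d3))"
  have "multiplicity (int p) (gcd d1 (gcd d2 d3)) = ?k"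
    using assms(4-7) by (simp add: multiplicity_gcd)
  moreover have "\<forall>\<^sub>F t in sequentially.
      local_density_trunc p m d1 d2 d3 (8 * (m - 2) * n + 3 * (m - 4)^2) t
      = (if int p ^ ?k dvd n then of_nat p ^ (multiplicity (int p) (m - 2) + ?k) else 0)"
    unfolding eventually_sequentially
    by (intro exI[of _ "multiplicity (int p) (m - 2) + ?k"] allI impI
        local_density_trunc_stable[OF assms(7-9)]) (use assms(1,4-6) in auto)
  ultimately show ?thesis
    unfolding has_local_density_def by (simp add: tendsto_eventually)
qed

end
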